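(* Let $1\le k<n$. The map $f_k(S)=(\lambda^{(1)}_i+\lambda^{(2)}_i)_{1\le i\le k}$ restricts to an injection $\Theta(k,2n+1)\to P(n-k,n)$.
   Context: Root system $B_n$: positive roots $e_a\pm e_b$ ($a<b$), $e_a$; simple roots $e_i-e_{i+1}$ ($i<n$), $e_n$; order $\alpha\le\beta$ iff $\beta-\alpha$ is a nonnegative integer combination of simple roots. Base region: roots $e_a\pm e_b$ ($a\le k<b$) and $e_a$ ($a\le k$), with $i$-th row ($1\le i\le k$) consisting of $e_{k+1-i}\pm e_b$ ($b>k$) and $e_{k+1-i}$. Top region: roots $e_a+e_b$ with $a<b\le k$. For $S$ a set of roots, $\lambda^{(1)}_i$ is the number of roots of $S$ in the $i$-th base row and $\lambda^{(2)}_i$ the number of roots of $S$ of the form $e_a+e_{k+1-i}$, $a<k+1-i$. $S$ (contained in the union of the two regions) is a $W^{OG(k,2n+1)}$-diagram if it meets each region in a lower order ideal of that region and, for each top-region root $e_a+e_b$, $e_a+e_b\in S$ whenever $S$ contains more than $2n+1-2k$ roots of the base rows indexed by $a$ and $b$ (rows $k+1-a$ and $k+1-b$) combined, and $e_a+e_b\notin S$ whenever it contains fewer than $2n+1-2k$ of them. $\Theta(k,2n+1)$ is the set of such diagrams. $P(n-k,n)$ is the set of partitions $\gamma=(\gamma_1\ge\dots\ge\gamma_k\ge0)$ with $\gamma_1\le 2n-k$ and $\gamma_i>\gamma_{i+1}$ whenever $\gamma_i>n-k$. *)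

theory Defs
  imports Main "HOL-Library.Function_Algebras"
begin

type_synonym vec = "nat \<Rightarrow> int"

text \<open>Standard basis vector e_a of Z^n (coordinates indexed by 1..n).\<close>
definition ev :: "nat \<Rightarrow> vec" where
  "ev a = (\<lambda>j. if j = a then 1 else 0)"

definition pos_roots :: "nat \<Rightarrow> vec set" where
  "pos_roots n =
     {ev a - ev b | a b. 1 \<le> a \<and> a < b \<and> b \<le> n}
   \<union> {ev a + ev b | a b. 1 \<le> a \<and> a < b \<and> b \<le> n}
   \<union> {ev a | a. 1 \<le> a \<and> a \<le> n}"

definition root_le :: "nat \<Rightarrow> vec \<Rightarrow> vec \<Rightarrow> bool" where
  "root_le n \<alpha> \<beta> \<longleftrightarrow>
     (\<exists>c :: nat \<Rightarrow> nat. \<beta> - \<alpha> =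
        (\<Sum>i\<in>{1..<n}. of_nat (c i) * (ev i - ev (Suc i))) + of_nat (c n) * ev n)"

definition base_row :: "nat \<Rightarrow> nat \<Rightarrow> nat \<Rightarrow> vec set" where
  "base_row k n i =
     {ev (k + 1 - i) - ev b | b. k < b \<and> b \<le> n}
   \<union> {ev (k + 1 - i) + ev b | b. k < b \<and> b \<le> n}
   \<union> {ev (k + 1 - i)}"

definition base_region :: "nat \<Rightarrow> nat \<Rightarrow> vec set" where
  "base_region k n = (\<Union>i\<in>{1..k}. base_row k n i)"

definition top_region :: "nat \<Rightarrow> vec set" where
  "top_region k = {ev a + ev b | a b. 1 \<le> a \<and> a < b \<and> b \<le> k}"

definition lower_ideal_in :: "nat \<Rightarrow> vec set \<Rightarrow> vec set \<Rightarrow> bool" where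
  "lower_ideal_in n R I \<longleftrightarrow> I \<subseteq> R \<and>
     (\<forall>x\<in>I. \<forall>y\<in>R. root_le n y x \<longrightarrow> y \<in> I)"

definition lambda1 :: "nat \<Rightarrow> nat \<Rightarrow> vec set \<Rightarrow> nat \<Rightarrow> nat" where
  "lambda1 k n S i = card (S \<inter> base_row k n i)"

definition lambda2 :: "nat \<Rightarrow> vec set \<Rightarrow> nat \<Rightarrow> nat" where
  "lambda2 k S i = card {ev a + ev (k + 1 - i) | a. 1 \<le> a \<and> a < k + 1 - i \<and>
                                                 ev a + ev (k + 1 - i) \<in> S}"

definition is_OG_diagram :: "nat \<Rightarrow> nat \<Rightarrow> vec set \<Rightarrow> bool" where
  "is_OG_diagram k n S \<longleftrightarrow>
     S \<subseteq> base_region k n \<union> top_region k \<and>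
     lower_ideal_in n (base_region k n) (S \<inter> base_region k n) \<and>
     lower_ideal_in n (top_region k) (S \<inter> top_region k) \<and>
     (\<forall>a b. 1 \<le> a \<and> a < b \<and> b \<le> k \<longrightarrow>
        (let m = card (S \<inter> (base_row k n (k + 1 - a) \<union> base_row k n (k + 1 - b))) in
          (m > 2 * n + 1 - 2 * k \<longrightarrow> ev a + ev b \<in> S) \<and>
          (m < 2 * n + 1 - 2 * k \<longrightarrow> ev a + ev b \<notin> S)))"

text \<open>Theta(k, 2n+1).\<close>
definition Theta :: "nat \<Rightarrow> nat \<Rightarrow> vec set set" where
  "Theta k n = {S. is_OG_diagram k n S}"

text \<open>P(n-k, n): partitions with k parts, encoded as gamma : nat => nat with gamma i the
  i-th part for 1 <= i <= k and gamma i = 0 otherwise.\<close>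
definition P_part :: "nat \<Rightarrow> nat \<Rightarrow> (nat \<Rightarrow> nat) set" where
  "P_part k n = {\<gamma>. (\<forall>i. i \<notin> {1..k} \<longrightarrow> \<gamma> i = 0) \<and>
      (\<forall>i\<in>{1..<k}. \<gamma> (Suc i) \<le> \<gamma> i) \<and>
      \<gamma> 1 \<le> 2 * n - k \<and>
      (\<forall>i\<in>{1..<k}. \<gamma> i > n - k \<longrightarrow> \<gamma> i > \<gamma> (Suc i))}"

definition f_map :: "nat \<Rightarrow> nat \<Rightarrow> vec set \<Rightarrow> (nat \<Rightarrow> nat)" where
  "f_map k n S = (\<lambda>i. if i \<in> {1..k} then lambda1 k n S i + lambda2 k S i else 0)"

end

theory Submission
  imports Defs
begin

text \<open>A diagram \<open>S\<close> meets every base row and every top column, each of which is a chain in the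
  root order, in a lower set; so \<open>S\<close> is determined by its row counts \<open>l a\<close> and column counts
  \<open>c b\<close> (row and column of \<open>e a\<close>, \<open>e b\<close>), while \<open>f_k S\<close> records only the sums \<open>l b + c b\<close>.
  The top-region rule squeezes \<open>c b\<close> between the numbers of \<open>a < b\<close> with
  \<open>l a + l b > 2n+1-2k\<close> and with \<open>l a + l b \<ge> 2n+1-2k\<close>, both increasing in \<open>l b\<close>; hence, by
  induction on \<open>b\<close>, the sum \<open>l b + c b\<close> determines \<open>l b\<close>, and \<open>f_k\<close> is injective.
  For the image, translation by the simple root \<open>e a - e (a+1)\<close> maps row and column \<open>a\<close> into
  row and column \<open>a+1\<close>, so the parts decrease weakly; when \<open>e a + e (a+1) \<notin> S\<close>, the top-region
  rule gives \<open>l a + l (a+1) \<le> 2(n-k)+1\<close> and column \<open>a+1\<close> is empty, which forces a strict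
  decrease below every part exceeding \<open>n-k\<close>.\<close>

lemma ev_inj: "ev a = ev b \<Longrightarrow> a = b"
  by (drule fun_cong[of _ _ a]) (simp add: ev_def split: if_splits)

subsection \<open>The root order\<close>

lemma root_le_refl: "root_le n x x"
  unfolding root_le_def by (rule exI[of _ "\<lambda>_. 0"]) simp

lemma root_le_trans:
  assumes "root_le n x y" "root_le n y z"
  shows "root_le n x z"
proof -
  obtain c where c: "y - x = (\<Sum>i\<in>{1..<n}. of_nat (c i) * (ev i - ev (Suc i))) + of_nat (c n) * ev n"
    using assms(1) unfolding root_le_def by blast
  obtain c' where c': "z - y = (\<Sum>i\<in>{1..<n}. of_nat (c' i) * (ev i - ev (Suc i))) + of_nat (c' n) * ev n"
    using assms(2) unfolding root_le_def by blast
  have "z - x = (z - y) + (y - x)" by simp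
  also have "\<dots> = (\<Sum>i\<in>{1..<n}. of_nat (c i + c' i) * (ev i - ev (Suc i))) + of_nat (c n + c' n) * ev n"
    unfolding c c' of_nat_add distrib_right sum.distrib by (simp add: algebra_simps)
  finally show ?thesis unfolding root_le_def by (intro exI[of _ "\<lambda>i. c i + c' i"])
qed

lemma root_le_add_simple_root:
  assumes "1 \<le> i" "i < n"
  shows "root_le n x (x + (ev i - ev (Suc i)))"
proof -
  let ?c = "\<lambda>j. if j = i then 1 else (0::nat)"
  have "(\<Sum>j\<in>{1..<n}. of_nat (?c j) * (ev j - ev (Suc j)))
      = (\<Sum>j\<in>{1..<n}. if j = i then ev i - ev (Suc i) else (0::vec))"
    by (rule sum.cong) auto
  also have "\<dots> = ev i - ev (Suc i)" using assms by simp
  finally show ?thesis unfolding root_le_def using assms by (intro exI[of _ ?c]) simp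
qed

lemma root_le_add_last_simple_root: "root_le n x (x + ev n)"
proof -
  let ?c = "\<lambda>j. if j = n then 1 else (0::nat)"
  have "(\<Sum>j\<in>{1..<n}. of_nat (?c j) * (ev j - ev (Suc j))) = (0::vec)"
    by (rule sum.neutral) auto
  then show ?thesis unfolding root_le_def by (intro exI[of _ ?c]) simp
qed

lemma lower_ideal_in_Int:
  "lower_ideal_in n R I \<Longrightarrow> C \<subseteq> R \<Longrightarrow> lower_ideal_in n C (I \<inter> C)"
  unfolding lower_ideal_in_def by blast

lemma lower_ideal_in_chain_eq:
  assumes "finite C" and chain: "\<And>x y. x \<in> C \<Longrightarrow> y \<in> C \<Longrightarrow> root_le n x y \<or> root_le n y x"
    and I: "lower_ideal_in n C I" and J: "lower_ideal_in n C J" and "card I = card J"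
  shows "I = J"
proof -
  have "I \<subseteq> J \<or> J \<subseteq> I"
  proof (rule ccontr)
    assume "\<not> (I \<subseteq> J \<or> J \<subseteq> I)"
    then obtain x y where "x \<in> I" "x \<notin> J" "y \<in> J" "y \<notin> I" by blast
    then show False using I J chain unfolding lower_ideal_in_def by blast
  qed
  moreover have "finite I" "finite J"
    using I J \<open>finite C\<close> finite_subset unfolding lower_ideal_in_def by blast+
  ultimately show ?thesis using \<open>card I = card J\<close> card_subset_eq by metis
qed

subsection \<open>Base rows\<close>

text \<open>Rows are indexed by the coordinate \<open>a\<close> of their common summand \<open>e\<^sub>a\<close>; this is the
  paper's base row \<open>k + 1 - a\<close>.\<close>

definition row_at :: "nat \<Rightarrow> nat \<Rightarrow> nat \<Rightarrow> vec set" where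
  "row_at k n a = {ev a - ev b | b. k < b \<and> b \<le> n} \<union> {ev a + ev b | b. k < b \<and> b \<le> n} \<union> {ev a}"

lemma base_row_eq_row_at: "base_row k n i = row_at k n (k + 1 - i)"
  by (simp add: base_row_def row_at_def)

lemma base_region_eq: "base_region k n = (\<Union>a\<in>{1..k}. row_at k n a)"
  unfolding base_region_def base_row_eq_row_at
proof (intro equalityI subsetI)
  fix x assume "x \<in> (\<Union>i\<in>{1..k}. row_at k n (k + 1 - i))"
  then obtain i where "i \<in> {1..k}" "x \<in> row_at k n (k + 1 - i)" by blast
  then show "x \<in> (\<Union>a\<in>{1..k}. row_at k n a)" by (intro UN_I[of "k + 1 - i"]) auto
next
  fix x assume "x \<in> (\<Union>a\<in>{1..k}. row_at k n a)"
  then obtain a where "a \<in> {1..k}" "x \<in> row_at k n a" by blast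
  then show "x \<in> (\<Union>i\<in>{1..k}. row_at k n (k + 1 - i))" by (intro UN_I[of "k + 1 - a"]) auto
qed

text \<open>The roots of a row in increasing order:
  \<open>e\<^sub>a - e\<^sub>k\<^sub>+\<^sub>1, \<dots>, e\<^sub>a - e\<^sub>n, e\<^sub>a, e\<^sub>a + e\<^sub>n, \<dots>, e\<^sub>a + e\<^sub>k\<^sub>+\<^sub>1\<close>.\<close>

definition row_enum :: "nat \<Rightarrow> nat \<Rightarrow> nat \<Rightarrow> nat \<Rightarrow> vec" where
  "row_enum k n a j =
     (if j < n - k then ev a - ev (k + 1 + j) else if j = n - k then ev a
      else ev a + ev (k + 1 + (2 * (n - k) - j)))"

lemma root_le_row_enum_Suc:
  assumes "j < 2 * (n - k)"
  shows "root_le n (row_enum k n a j) (row_enum k n a (Suc j))"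
proof -
  consider "Suc j < n - k" | "Suc j = n - k" | "j = n - k" | "n - k < j" by linarith
  then show ?thesis
  proof cases
    case 1
    then have "row_enum k n a (Suc j) = row_enum k n a j + (ev (k + 1 + j) - ev (Suc (k + 1 + j)))"
      by (simp add: row_enum_def algebra_simps)
    moreover have "1 \<le> k + 1 + j" "k + 1 + j < n" using 1 by linarith+
    ultimately show ?thesis using root_le_add_simple_root by metis
  next
    case 2
    then have "k + 1 + j = n" using assms by linarith
    with 2 have "row_enum k n a (Suc j) = row_enum k n a j + ev n"
      by (simp add: row_enum_def algebra_simps)
    then show ?thesis by (metis root_le_add_last_simple_root)
  next
    case 3
    then have "k + 1 + (2 * (n - k) - Suc j) = n" using assms by linarith
    with 3 have "row_enum k n a (Suc j) = row_enum k n a j + ev n"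
      by (simp add: row_enum_def algebra_simps)
    then show ?thesis by (metis root_le_add_last_simple_root)
  next
    case 4
    define i where "i = k + (2 * (n - k) - Suc j)"
    have "k + 1 + (2 * (n - k) - Suc j) = Suc i" "k + 1 + (2 * (n - k) - j) = Suc (Suc i)"
      using 4 assms unfolding i_def by linarith+
    then have "row_enum k n a (Suc j) = row_enum k n a j + (ev (Suc i) - ev (Suc (Suc i)))"
      using 4 by (simp add: row_enum_def algebra_simps)
    moreover have "1 \<le> Suc i" "Suc i < n" using 4 assms unfolding i_def by linarith+
    ultimately show ?thesis using root_le_add_simple_root by metis
  qed
qed

lemma root_le_row_enum_mono:
  assumes "j \<le> j'" "j' \<le> 2 * (n - k)"
  shows "root_le n (row_enum k n a j) (row_enum k n a j')"
  using assms
proof (induction j' rule: dec_induct)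
  case base
  show ?case by (rule root_le_refl)
next
  case (step m)
  then show ?case using root_le_row_enum_Suc[of m n k a] root_le_trans by simp
qed

lemma row_at_eq_image_row_enum:
  assumes "k < n"
  shows "row_at k n a = row_enum k n a ` {0..2 * (n - k)}"
proof (rule set_eqI, rule iffI)
  fix x assume "x \<in> row_at k n a"
  then consider b where "k < b" "b \<le> n" "x = ev a - ev b" | b where "k < b" "b \<le> n" "x = ev a + ev b"
    | "x = ev a"
    unfolding row_at_def by blast
  then show "x \<in> row_enum k n a ` {0..2 * (n - k)}"
  proof cases
    case 1
    then show ?thesis by (intro rev_image_eqI[of "b - k - 1"]) (auto simp: row_enum_def)
  next
    case 2
    then have "k + 1 + (2 * (n - k) - (2 * (n - k) - (b - k - 1))) = b" by linarith
    then show ?thesis using 2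
      by (intro rev_image_eqI[of "2 * (n - k) - (b - k - 1)"]) (auto simp: row_enum_def)
  next
    case 3
    then show ?thesis by (intro rev_image_eqI[of "n - k"]) (auto simp: row_enum_def)
  qed
next
  fix x assume "x \<in> row_enum k n a ` {0..2 * (n - k)}"
  then obtain j where j: "j \<le> 2 * (n - k)" "x = row_enum k n a j" by auto
  consider "j < n - k" | "j = n - k" | "n - k < j" by linarith
  then show "x \<in> row_at k n a"
  proof cases
    case 1
    then show ?thesis using j unfolding row_at_def row_enum_def by (auto intro!: exI[of _ "k + 1 + j"])
  next
    case 2
    then show ?thesis using j unfolding row_at_def row_enum_def by auto
  next
    case 3
    then have "k < k + 1 + (2 * (n - k) - j)" "k + 1 + (2 * (n - k) - j) \<le> n"
      using j assms by linarith+
    then show ?thesis using 3 j unfolding row_at_def row_enum_def by auto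
  qed
qed

lemma row_at_chain:
  assumes "k < n" "x \<in> row_at k n a" "y \<in> row_at k n a"
  shows "root_le n x y \<or> root_le n y x"
proof -
  obtain j j' where "j \<le> 2 * (n - k)" "j' \<le> 2 * (n - k)" "x = row_enum k n a j" "y = row_enum k n a j'"
    using assms row_at_eq_image_row_enum by auto
  then show ?thesis using root_le_row_enum_mono by (metis nat_le_linear)
qed

lemma finite_row_at: "k < n \<Longrightarrow> finite (row_at k n a)"
  by (simp add: row_at_eq_image_row_enum)

lemma card_row_at_le: "k < n \<Longrightarrow> card (row_at k n a) \<le> 2 * (n - k) + 1"
  using card_image_le[of "{0..2 * (n - k)}" "row_enum k n a"] by (simp add: row_at_eq_image_row_enum)

lemma disjoint_row_at:
  assumes "a \<le> k" "a' \<noteq> a"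
  shows "row_at k n a \<inter> row_at k n a' = {}"
proof -
  have "x a = 1" if "x \<in> row_at k n a" for x
    using that assms unfolding row_at_def by (auto simp: ev_def)
  moreover have "x a = 0" if "x \<in> row_at k n a'" for x
    using that assms unfolding row_at_def by (auto simp: ev_def)
  ultimately show ?thesis by fastforce
qed

lemma row_at_shift:
  assumes "x \<in> row_at k n a"
  shows "x - ev a + ev a' \<in> row_at k n a'"
proof -
  from assms consider c where "k < c" "c \<le> n" "x = ev a - ev c"
    | c where "k < c" "c \<le> n" "x = ev a + ev c" | "x = ev a"
    unfolding row_at_def by blast
  then show ?thesis
  proof cases
    case 1
    then have "x - ev a + ev a' = ev a' - ev c" by simp
    with 1 show ?thesis unfolding row_at_def by blast
  next
    case 2
    then have "x - ev a + ev a' = ev a' + ev c" by simp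
    with 2 show ?thesis unfolding row_at_def by blast
  qed (simp add: row_at_def)
qed

lemma row_at_subset_base_region: "a \<in> {1..k} \<Longrightarrow> row_at k n a \<subseteq> base_region k n"
  unfolding base_region_eq by blast

subsection \<open>Top columns\<close>

definition column_at :: "nat \<Rightarrow> vec set" where
  "column_at b = (\<lambda>a. ev a + ev b) ` {1..<b}"

lemma top_region_eq: "top_region k = (\<Union>b\<in>{1..k}. column_at b)"
  unfolding top_region_def column_at_def by force

lemma finite_column_at: "finite (column_at b)"
  by (simp add: column_at_def)

lemma inj_on_add_ev: "inj_on (\<lambda>a. ev a + ev b) A"
  by (rule inj_onI) (simp add: ev_inj)

lemma card_column_at: "card (column_at b) = b - 1"
  by (simp add: column_at_def card_image[OF inj_on_add_ev])

lemma root_le_column: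
  assumes "1 \<le> a" "a \<le> a'" "a' < b" "b \<le> n"
  shows "root_le n (ev a' + ev b) (ev a + ev b)"
  using assms(2)
proof (induction a' rule: dec_induct)
  case base
  show ?case by (rule root_le_refl)
next
  case (step m)
  have shift: "ev (Suc m) + ev b + (ev m - ev (Suc m)) = ev m + ev b" by simp
  have "1 \<le> m" "m < n" using assms step.hyps by linarith+
  then have "root_le n (ev (Suc m) + ev b) (ev m + ev b)"
    by (rule root_le_add_simple_root[of m n "ev (Suc m) + ev b", unfolded shift])
  then show ?case using step.IH by (rule root_le_trans)
qed

lemma column_at_chain:
  assumes "b \<le> n" "x \<in> column_at b" "y \<in> column_at b"
  shows "root_le n x y \<or> root_le n y x"
proof -
  obtain a a' where a: "1 \<le> a" "a < b" "x = ev a + ev b" and a': "1 \<le> a'" "a' < b" "y = ev a' + ev b"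
    using assms unfolding column_at_def by auto
  show ?thesis
  proof (cases "a \<le> a'")
    case True
    then show ?thesis using root_le_column[OF a(1) True a'(2) assms(1)] a a' by simp
  next
    case False
    then show ?thesis using root_le_column[OF a'(1) _ a(2) assms(1)] a a' by simp
  qed
qed

lemma column_at_subset_top_region: "b \<in> {1..k} \<Longrightarrow> column_at b \<subseteq> top_region k"
  unfolding top_region_eq by blast

subsection \<open>Row and column counts of a diagram\<close>

definition row_count :: "nat \<Rightarrow> nat \<Rightarrow> vec set \<Rightarrow> nat \<Rightarrow> nat" where
  "row_count k n S a = card (S \<inter> row_at k n a)"

definition column_count :: "vec set \<Rightarrow> nat \<Rightarrow> nat" where
  "column_count S b = card (S \<inter> column_at b)"

lemma f_map_eq_counts:
  assumes "1 \<le> b" "b \<le> k"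
  shows "f_map k n S (k + 1 - b) = row_count k n S b + column_count S b"
proof -
  have b: "k + 1 - (k + 1 - b) = b" "k + 1 - b \<in> {1..k}" using assms by auto
  have "lambda2 k S (k + 1 - b) = column_count S b"
    unfolding lambda2_def b column_count_def column_at_def by (rule arg_cong[where f = card]) auto
  then show ?thesis
    using b(2) unfolding f_map_def lambda1_def base_row_eq_row_at b(1) row_count_def by simp
qed

lemma row_count_le: "k < n \<Longrightarrow> row_count k n S a \<le> 2 * (n - k) + 1"
  unfolding row_count_def
  by (meson Int_lower2 card_mono card_row_at_le finite_row_at le_trans)

lemma column_count_le: "column_count S b \<le> b - 1"
  unfolding column_count_def
  by (metis Int_lower2 card_column_at card_mono finite_column_at)

lemma card_Int_two_rows:
  assumes "k < n" "a < b" "b \<le> k"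
  shows "card (S \<inter> (base_row k n (k + 1 - a) \<union> base_row k n (k + 1 - b)))
       = row_count k n S a + row_count k n S b"
proof -
  have "S \<inter> (base_row k n (k + 1 - a) \<union> base_row k n (k + 1 - b))
      = (S \<inter> row_at k n a) \<union> (S \<inter> row_at k n b)"
    using assms by (simp add: base_row_eq_row_at Int_Un_distrib)
  moreover have "(S \<inter> row_at k n a) \<inter> (S \<inter> row_at k n b) = {}"
    using disjoint_row_at[of a k b n] assms by auto
  ultimately show ?thesis
    unfolding row_count_def using card_Un_disjoint finite_row_at[OF assms(1)] by (metis finite_Int)
qed

context
  fixes k n :: nat and S :: "vec set"
  assumes diagram: "is_OG_diagram k n S"
begin

lemma diagram_base_lower:
  "x \<in> S \<Longrightarrow> x \<in> base_region k n \<Longrightarrow> y \<in> base_region k n \<Longrightarrow> root_le n y x \<Longrightarrow> y \<in> S"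
  using diagram unfolding is_OG_diagram_def lower_ideal_in_def by blast

lemma diagram_top_lower:
  "x \<in> S \<Longrightarrow> x \<in> top_region k \<Longrightarrow> y \<in> top_region k \<Longrightarrow> root_le n y x \<Longrightarrow> y \<in> S"
  using diagram unfolding is_OG_diagram_def lower_ideal_in_def by blast

lemma diagram_row_lower_ideal:
  assumes "a \<in> {1..k}"
  shows "lower_ideal_in n (row_at k n a) (S \<inter> row_at k n a)"
proof -
  have "lower_ideal_in n (row_at k n a) (S \<inter> base_region k n \<inter> row_at k n a)"
    using diagram row_at_subset_base_region[OF assms]
    unfolding is_OG_diagram_def by (blast intro: lower_ideal_in_Int)
  then show ?thesis using row_at_subset_base_region[OF assms] by (simp add: Int_absorb1 Int_assoc)
qed

lemma diagram_column_lower_ideal: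
  assumes "b \<in> {1..k}"
  shows "lower_ideal_in n (column_at b) (S \<inter> column_at b)"
proof -
  have "lower_ideal_in n (column_at b) (S \<inter> top_region k \<inter> column_at b)"
    using diagram column_at_subset_top_region[OF assms]
    unfolding is_OG_diagram_def by (blast intro: lower_ideal_in_Int)
  then show ?thesis using column_at_subset_top_region[OF assms] by (simp add: Int_absorb1 Int_assoc)
qed

context
  assumes k_less_n: "k < n"
begin

lemma diagram_top_rule:
  assumes "1 \<le> a" "a < b" "b \<le> k"
  shows diagram_top_rule_mem: "2 * n + 1 - 2 * k < row_count k n S a + row_count k n S b
          \<Longrightarrow> ev a + ev b \<in> S"
    and diagram_top_rule_not_mem: "row_count k n S a + row_count k n S b < 2 * n + 1 - 2 * k
          \<Longrightarrow> ev a + ev b \<notin> S"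
  using diagram[unfolded is_OG_diagram_def, THEN conjunct2, THEN conjunct2, THEN conjunct2,
      rule_format, of a b] assms
  unfolding Let_def card_Int_two_rows[OF k_less_n assms(2,3)] by blast+

text \<open>Translation by the simple root \<open>e\<^sub>a - e\<^sub>a\<^sub>+\<^sub>1\<close> moves row and column \<open>a\<close> down into
  row and column \<open>a + 1\<close>.\<close>

lemma row_count_le_Suc:
  assumes "1 \<le> a" "Suc a \<le> k"
  shows "row_count k n S a \<le> row_count k n S (Suc a)"
proof -
  let ?d = "ev a - ev (Suc a)"
  have "(\<lambda>x. x - ?d) ` (S \<inter> row_at k n a) \<subseteq> S \<inter> row_at k n (Suc a)"
  proof
    fix z assume "z \<in> (\<lambda>x. x - ?d) ` (S \<inter> row_at k n a)"
    then obtain x where x: "x \<in> S" "x \<in> row_at k n a" "z = x - ?d" by blast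
    have "z = x - ev a + ev (Suc a)" using x(3) by simp
    with row_at_shift[OF x(2)] have z: "z \<in> row_at k n (Suc a)" by metis
    have "root_le n z (z + ?d)"
      by (rule root_le_add_simple_root) (use assms k_less_n in auto)
    moreover have "a \<in> {1..k}" "Suc a \<in> {1..k}" using assms by auto
    then have "x \<in> base_region k n" "z \<in> base_region k n"
      using x(2) z row_at_subset_base_region by blast+
    ultimately show "z \<in> S \<inter> row_at k n (Suc a)"
      using diagram_base_lower[OF x(1)] x(3) z by auto
  qed
  then have "card ((\<lambda>x. x - ?d) ` (S \<inter> row_at k n a)) \<le> row_count k n S (Suc a)"
    unfolding row_count_def by (rule card_mono[rotated]) (simp add: finite_row_at[OF k_less_n])
  then show ?thesis unfolding row_count_def by (simp add: card_image inj_on_def)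
qed

lemma column_count_Suc:
  assumes "1 \<le> a" "Suc a \<le> k"
  shows "column_count S a + (if ev a + ev (Suc a) \<in> S then 1 else 0) \<le> column_count S (Suc a)"
proof -
  let ?d = "ev a - ev (Suc a)" and ?t = "ev a + ev (Suc a)"
  have "(\<lambda>x. x - ?d) ` (S \<inter> column_at a) \<subseteq> S \<inter> column_at (Suc a) - {?t}"
  proof
    fix z assume "z \<in> (\<lambda>x. x - ?d) ` (S \<inter> column_at a)"
    then obtain c where c: "1 \<le> c" "c < a" "ev c + ev a \<in> S" and zc: "z = ev c + ev (Suc a)"
      unfolding column_at_def by (auto simp: algebra_simps)
    have z: "z \<in> column_at (Suc a)" "z \<noteq> ?t"
      using c unfolding zc column_at_def by (auto dest: ev_inj)
    have "root_le n z (z + ?d)"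
      by (rule root_le_add_simple_root) (use assms k_less_n in auto)
    moreover have "z + ?d = ev c + ev a" unfolding zc by simp
    moreover have "ev c + ev a \<in> top_region k"
      using c assms unfolding top_region_def by force
    moreover have "z \<in> top_region k" using assms z(1) column_at_subset_top_region by auto
    ultimately show "z \<in> S \<inter> column_at (Suc a) - {?t}"
      using diagram_top_lower[OF c(3)] z by auto
  qed
  then have "card ((\<lambda>x. x - ?d) ` (S \<inter> column_at a)) \<le> card (S \<inter> column_at (Suc a) - {?t})"
    by (rule card_mono[rotated]) (simp add: finite_column_at)
  then have "column_count S a \<le> card (S \<inter> column_at (Suc a) - {?t})"
    unfolding column_count_def by (simp add: card_image inj_on_def)
  moreover have "card (S \<inter> column_at (Suc a) - {?t}) + (if ?t \<in> S then 1 else 0)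
      = column_count S (Suc a)"
  proof (cases "?t \<in> S")
    case True
    moreover have "?t \<in> column_at (Suc a)" using assms unfolding column_at_def by auto
    ultimately show ?thesis
      unfolding column_count_def
      using card.remove[of "S \<inter> column_at (Suc a)" ?t] finite_column_at by simp
  next
    case False
    then show ?thesis unfolding column_count_def by (simp add: Diff_insert0)
  qed
  ultimately show ?thesis by linarith
qed

lemma column_count_Suc_eq_0:
  assumes "1 \<le> a" "Suc a \<le> k" "ev a + ev (Suc a) \<notin> S"
  shows "column_count S (Suc a) = 0"
proof -
  have "x \<notin> S" if "x \<in> column_at (Suc a)" for x
  proof
    assume "x \<in> S"
    obtain c where c: "1 \<le> c" "c \<le> a" "x = ev c + ev (Suc a)"
      using \<open>x \<in> column_at (Suc a)\<close> unfolding column_at_def by auto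
    have "root_le n (ev a + ev (Suc a)) x"
      unfolding c(3) by (rule root_le_column) (use c assms k_less_n in auto)
    moreover have "ev a + ev (Suc a) \<in> top_region k"
      using assms unfolding top_region_def by force
    moreover have "x \<in> top_region k" using that assms column_at_subset_top_region by auto
    ultimately show False using diagram_top_lower[OF \<open>x \<in> S\<close>] assms(3) by blast
  qed
  then have "S \<inter> column_at (Suc a) = {}" by blast
  then show ?thesis unfolding column_count_def by simp
qed

lemma counts_le_Suc:
  assumes "1 \<le> a" "Suc a \<le> k"
  shows "row_count k n S a + column_count S a \<le> row_count k n S (Suc a) + column_count S (Suc a)"
  using row_count_le_Suc[OF assms] column_count_Suc[OF assms] by linarith

lemma counts_less_Suc:
  assumes "1 \<le> a" "Suc a \<le> k"
    and large: "n - k < row_count k n S (Suc a) + column_count S (Suc a)"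
  shows "row_count k n S a + column_count S a < row_count k n S (Suc a) + column_count S (Suc a)"
proof (cases "ev a + ev (Suc a) \<in> S")
  case True
  then show ?thesis using row_count_le_Suc[OF assms(1,2)] column_count_Suc[OF assms(1,2)] by simp
next
  case False
  have "column_count S (Suc a) = 0" by (rule column_count_Suc_eq_0[OF assms(1,2) False])
  moreover have "column_count S a = 0" using column_count_Suc[OF assms(1,2)] calculation by simp
  moreover have "row_count k n S a + row_count k n S (Suc a) \<le> 2 * n + 1 - 2 * k"
    using diagram_top_rule_mem[OF assms(1) _ assms(2)] False by force
  ultimately show ?thesis using large k_less_n by linarith
qed

lemma column_count_ge:
  assumes "b \<le> k"
  shows "card {a \<in> {1..<b}. 2 * n + 1 - 2 * k < row_count k n S a + row_count k n S b}
       \<le> column_count S b"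
proof -
  let ?A = "{a \<in> {1..<b}. 2 * n + 1 - 2 * k < row_count k n S a + row_count k n S b}"
  have "(\<lambda>a. ev a + ev b) ` ?A \<subseteq> S \<inter> column_at b"
  proof
    fix x assume "x \<in> (\<lambda>a. ev a + ev b) ` ?A"
    then obtain a where "a \<in> {1..<b}" "2 * n + 1 - 2 * k < row_count k n S a + row_count k n S b"
      and x: "x = ev a + ev b" by blast
    then show "x \<in> S \<inter> column_at b"
      using diagram_top_rule_mem[of a b] assms unfolding column_at_def by auto
  qed
  then have "card ((\<lambda>a. ev a + ev b) ` ?A) \<le> column_count S b"
    unfolding column_count_def by (rule card_mono[rotated]) (simp add: finite_column_at)
  then show ?thesis by (simp add: card_image[OF inj_on_add_ev])
qed

lemma column_count_le_card:
  assumes "b \<le> k"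
  shows "column_count S b
       \<le> card {a \<in> {1..<b}. 2 * n + 1 - 2 * k \<le> row_count k n S a + row_count k n S b}"
proof -
  let ?A = "{a \<in> {1..<b}. 2 * n + 1 - 2 * k \<le> row_count k n S a + row_count k n S b}"
  have "S \<inter> column_at b \<subseteq> (\<lambda>a. ev a + ev b) ` ?A"
  proof
    fix x assume "x \<in> S \<inter> column_at b"
    then obtain a where a: "a \<in> {1..<b}" "x = ev a + ev b" "x \<in> S"
      unfolding column_at_def by blast
    then have "\<not> row_count k n S a + row_count k n S b < 2 * n + 1 - 2 * k"
      using diagram_top_rule_not_mem[of a b] assms by auto
    then show "x \<in> (\<lambda>a. ev a + ev b) ` ?A" using a by auto
  qed
  then have "column_count S b \<le> card ((\<lambda>a. ev a + ev b) ` ?A)"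
    unfolding column_count_def by (rule card_mono[rotated]) simp
  also have "\<dots> = card ?A" by (rule card_image[OF inj_on_add_ev])
  finally show ?thesis .
qed

end

end

lemma f_map_in_P_part:
  assumes D: "is_OG_diagram k n S" and "1 \<le> k" "k < n"
  shows "f_map k n S \<in> P_part k n"
proof -
  let ?g = "f_map k n S"
  have g: "?g (k - a) = row_count k n S (Suc a) + column_count S (Suc a)"
    "?g (Suc (k - a)) = row_count k n S a + column_count S a"
    if "1 \<le> a" "Suc a \<le> k" for a
    using f_map_eq_counts[of "Suc a" k n S] f_map_eq_counts[of a k n S] that by (simp_all add: Suc_diff_le)
  have reflected: "1 \<le> k - i" "Suc (k - i) \<le> k" "k - (k - i) = i" if "i \<in> {1..<k}" for i
    using that by auto
  have "\<forall>i\<in>{1..<k}. ?g (Suc i) \<le> ?g i"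
  proof
    fix i assume "i \<in> {1..<k}"
    from reflected[OF this] show "?g (Suc i) \<le> ?g i"
      using g[of "k - i"] counts_le_Suc[OF D \<open>k < n\<close>, of "k - i"] by simp
  qed
  moreover have "\<forall>i\<in>{1..<k}. n - k < ?g i \<longrightarrow> ?g (Suc i) < ?g i"
  proof (intro ballI impI)
    fix i assume "i \<in> {1..<k}" "n - k < ?g i"
    from reflected[OF this(1)] this(2) show "?g (Suc i) < ?g i"
      using g[of "k - i"] counts_less_Suc[OF D \<open>k < n\<close>, of "k - i"] by simp
  qed
  moreover have "?g 1 \<le> 2 * n - k"
    using f_map_eq_counts[of k k n S] row_count_le[OF \<open>k < n\<close>, of S k] column_count_le[of S k] assms
    by simp
  moreover have "\<forall>i. i \<notin> {1..k} \<longrightarrow> ?g i = 0" by (simp add: f_map_def)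
  ultimately show ?thesis unfolding P_part_def by blast
qed

lemma counts_less_if_row_count_less:
  assumes D: "is_OG_diagram k n S" and D': "is_OG_diagram k n S'" and "k < n" "b \<le> k"
    and agree: "\<forall>a\<in>{1..<b}. row_count k n S a = row_count k n S' a"
    and less: "row_count k n S b < row_count k n S' b"
  shows "row_count k n S b + column_count S b < row_count k n S' b + column_count S' b"
proof -
  have "column_count S b
      \<le> card {a \<in> {1..<b}. 2 * n + 1 - 2 * k \<le> row_count k n S a + row_count k n S b}"
    by (rule column_count_le_card[OF D \<open>k < n\<close> \<open>b \<le> k\<close>])
  also have "\<dots> \<le> card {a \<in> {1..<b}. 2 * n + 1 - 2 * k < row_count k n S' a + row_count k n S' b}"
    by (rule card_mono) (use agree less in auto)
  also have "\<dots> \<le> column_count S' b"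
    by (rule column_count_ge[OF D' \<open>k < n\<close> \<open>b \<le> k\<close>])
  finally show ?thesis using less by simp
qed

lemma row_count_eq_if_f_map_eq:
  assumes D: "is_OG_diagram k n S" and D': "is_OG_diagram k n S'" and "k < n"
    and f: "f_map k n S = f_map k n S'"
  shows "1 \<le> b \<Longrightarrow> b \<le> k \<Longrightarrow> row_count k n S b = row_count k n S' b"
proof (induction b rule: less_induct)
  case (less b)
  have agree: "\<forall>a\<in>{1..<b}. row_count k n S a = row_count k n S' a" using less by auto
  then have agree': "\<forall>a\<in>{1..<b}. row_count k n S' a = row_count k n S a" by simp
  have sum: "row_count k n S b + column_count S b = row_count k n S' b + column_count S' b"
    using f_map_eq_counts[OF less.prems, of n S] f_map_eq_counts[OF less.prems, of n S'] f by simp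
  show ?case
  proof (rule linorder_cases[of "row_count k n S b" "row_count k n S' b"])
    assume "row_count k n S b < row_count k n S' b"
    then show ?case
      using counts_less_if_row_count_less[OF D D' \<open>k < n\<close> less.prems(2) agree] sum by simp
  next
    assume "row_count k n S b = row_count k n S' b"
    then show ?case .
  next
    assume "row_count k n S' b < row_count k n S b"
    then show ?case
      using counts_less_if_row_count_less[OF D' D \<open>k < n\<close> less.prems(2) agree'] sum by simp
  qed
qed

lemma diagram_eq_Union:
  assumes "is_OG_diagram k n S"
  shows "(\<Union>a\<in>{1..k}. S \<inter> row_at k n a) \<union> (\<Union>b\<in>{1..k}. S \<inter> column_at b) = S"
proof -
  have "S \<subseteq> (\<Union>a\<in>{1..k}. row_at k n a) \<union> (\<Union>b\<in>{1..k}. column_at b)"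
    using assms unfolding is_OG_diagram_def base_region_eq top_region_eq by blast
  then show ?thesis by blast
qed

lemma diagram_eqI:
  assumes D: "is_OG_diagram k n S" and D': "is_OG_diagram k n S'" and "k < n"
    and rows: "\<And>a. a \<in> {1..k} \<Longrightarrow> row_count k n S a = row_count k n S' a"
    and columns: "\<And>b. b \<in> {1..k} \<Longrightarrow> column_count S b = column_count S' b"
  shows "S = S'"
proof -
  have "S \<inter> row_at k n a = S' \<inter> row_at k n a" if a: "a \<in> {1..k}" for a
  proof (rule lower_ideal_in_chain_eq)
    show "finite (row_at k n a)" by (rule finite_row_at[OF \<open>k < n\<close>])
    show "root_le n x y \<or> root_le n y x" if "x \<in> row_at k n a" "y \<in> row_at k n a" for x y
      using row_at_chain[OF \<open>k < n\<close> that] .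
    show "lower_ideal_in n (row_at k n a) (S \<inter> row_at k n a)"
      by (rule diagram_row_lower_ideal[OF D a])
    show "lower_ideal_in n (row_at k n a) (S' \<inter> row_at k n a)"
      by (rule diagram_row_lower_ideal[OF D' a])
    show "card (S \<inter> row_at k n a) = card (S' \<inter> row_at k n a)"
      using rows[OF a] unfolding row_count_def .
  qed
  moreover have "S \<inter> column_at b = S' \<inter> column_at b" if b: "b \<in> {1..k}" for b
  proof (rule lower_ideal_in_chain_eq)
    show "finite (column_at b)" by (rule finite_column_at)
    show "root_le n x y \<or> root_le n y x" if "x \<in> column_at b" "y \<in> column_at b" for x y
      using column_at_chain[OF _ that] b \<open>k < n\<close> by simp
    show "lower_ideal_in n (column_at b) (S \<inter> column_at b)"
      by (rule diagram_column_lower_ideal[OF D b])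
    show "lower_ideal_in n (column_at b) (S' \<inter> column_at b)"
      by (rule diagram_column_lower_ideal[OF D' b])
    show "card (S \<inter> column_at b) = card (S' \<inter> column_at b)"
      using columns[OF b] unfolding column_count_def .
  qed
  ultimately have "(\<Union>a\<in>{1..k}. S \<inter> row_at k n a) \<union> (\<Union>b\<in>{1..k}. S \<inter> column_at b)
      = (\<Union>a\<in>{1..k}. S' \<inter> row_at k n a) \<union> (\<Union>b\<in>{1..k}. S' \<inter> column_at b)"
    by (intro arg_cong2[where f = "(\<union>)"] SUP_cong) simp_all
  then show ?thesis using diagram_eq_Union[OF D] diagram_eq_Union[OF D'] by simp
qed

lemma inj_on_f_map:
  assumes "k < n"
  shows "inj_on (f_map k n) (Theta k n)"
proof (rule inj_onI)
  fix S S' assume "S \<in> Theta k n" "S' \<in> Theta k n" and f: "f_map k n S = f_map k n S'"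
  then have D: "is_OG_diagram k n S" and D': "is_OG_diagram k n S'" unfolding Theta_def by auto
  have rows: "row_count k n S b = row_count k n S' b" if "b \<in> {1..k}" for b
    using row_count_eq_if_f_map_eq[OF D D' \<open>k < n\<close> f] that by simp
  have "column_count S b = column_count S' b" if "b \<in> {1..k}" for b
    using f_map_eq_counts[of b k n S] f_map_eq_counts[of b k n S'] f rows[OF that] that by simp
  then show "S = S'" using diagram_eqI[OF D D' assms] rows by blast
qed

theorem lemma3p8:
  fixes k n :: nat
  assumes "1 \<le> k" and "k < n"
  shows "f_map k n ` Theta k n \<subseteq> P_part k n \<and> inj_on (f_map k n) (Theta k n)"
proof
  show "f_map k n ` Theta k n \<subseteq> P_part k n"
    using f_map_in_P_part assms unfolding Theta_def by blast
  show "inj_on (f_map k n) (Theta k n)" by (rule inj_on_f_map[OF \<open>k < n\<close>])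
qed

end
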